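(* Let $\mathcal S$ be a complete separable metric space, $\mu$ a boundedly finite Borel measure on $\mathcal S$ and $a,\rho,k>0$. For a finite family of pairwise disjoint bounded Borel sets $A_1,\dots,A_l$ and nonnegative integers $n_1,\dots,n_l$ define $$P_l(A_1,\dots,A_l;n_1,\dots,n_l)=\frac{\rho_{(k\sum_{i=1}^l\mu(A_i))}\,a_{(\sum_{i=1}^l n_i)}}{(\rho+a)_{(k\sum_{i=1}^l\mu(A_i)+\sum_{i=1}^l n_i)}}\prod_{i=1}^l\frac{[k\mu(A_i)]_{(n_i)}}{n_i!}.$$ Then (I) for every permutation $i_1,\dots,i_l$ of $1,\dots,l$, $P_l(A_{i_1},\dots,A_{i_l};n_{i_1},\dots,n_{i_l})=P_l(A_1,\dots,A_l;n_1,\dots,n_l)$; and (II) for $l\ge2$, $\sum_{r=0}^\infty P_l(A_1,\dots,A_l;n_1,\dots,n_{l-1},r)=P_{l-1}(A_1,\dots,A_{l-1};n_1,\dots,n_{l-1})$.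
   Context: For $x>0$, $\beta\ge0$, $x_{(\beta)}=\Gamma(x+\beta)/\Gamma(x)$, with the convention $0_{(0)}=1$ and $0_{(n)}=0$ for integers $n\ge1$. *)

theory Defs
  imports "HOL-Analysis.Analysis"
begin

text \<open>Rising factorial x_(beta) = Gamma(x+beta)/Gamma(x) for x > 0, with the
  convention 0_(0) = 1 and 0_(beta) = 0 for beta > 0 (only integer beta occur with x = 0).\<close>
definition rising :: "real \<Rightarrow> real \<Rightarrow> real" where
  "rising x b = (if x > 0 then Gamma (x + b) / Gamma x else if b = 0 then 1 else 0)"

definition Pl :: "real \<Rightarrow> real \<Rightarrow> real \<Rightarrow> 'a measure \<Rightarrow> nat \<Rightarrow> (nat \<Rightarrow> 'a set) \<Rightarrow> (nat \<Rightarrow> nat) \<Rightarrow> real" where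
  "Pl a \<rho> k M l A n =
     (let S = (\<Sum>i=1..l. measure M (A i)); N = real (\<Sum>i=1..l. n i) in
      rising \<rho> (k * S) * rising a N / rising (\<rho> + a) (k * S + N)
      * (\<Prod>i=1..l. rising (k * measure M (A i)) (real (n i)) / fact (n i)))"

end

theory Submission
  imports Defs
begin

text \<open>Permutation invariance is immediate, since \<open>Pl\<close> depends on the family only through
  sums and a product over \<open>{1..l}\<close>. For the marginal, put \<open>x = k \<mu>(A\<^sub>l)\<close>,
  \<open>\<alpha> = a + \<Sum>\<^sub>i\<^sub><\<^sub>l n\<^sub>i\<close> and \<open>c = \<rho> + k \<Sum>\<^sub>i\<^sub><\<^sub>l \<mu>(A\<^sub>i)\<close>. If \<open>x = 0\<close> only the term \<open>r = 0\<close> survives;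
  otherwise, after cancelling everything independent of \<open>r = n\<^sub>l\<close>, the series is Gauss's
  hypergeometric sum \<open>\<^sub>2F\<^sub>1(\<alpha>, x; \<alpha> + x + c; 1)\<close>. It is evaluated by expanding
  \<open>(1 - t)\<^sup>-\<^sup>x\<close> in a binomial series inside a Beta integral and integrating term by term.\<close>

lemma Gamma_add_of_nat_real:
  fixes x :: real
  assumes "x > 0"
  shows "Gamma (x + real r) = pochhammer x r * Gamma x"
proof -
  have "x \<notin> \<int>\<^sub>\<le>\<^sub>0" using assms by (auto elim: nonpos_Ints_cases)
  with assms show ?thesis
    by (simp add: pochhammer_Gamma Gamma_real_pos[THEN less_imp_neq, symmetric])
qed

lemma Gamma_binomial_series_sums:
  fixes b t :: real
  assumes b: "b > 0" and t: "0 < t" "t < 1"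
  shows "(\<lambda>r. Gamma (b + real r) / fact r * t ^ r) sums (Gamma b * (1 - t) powr (- b))"
proof -
  have "\<bar>-t\<bar> < 1" using t by simp
  from gen_binomial_real[OF this, of "-b"]
  have "(\<lambda>r. ((-b) gchoose r) * (-t) ^ r) sums (1 - t) powr (-b)" by simp
  also have "(\<lambda>r. ((-b) gchoose r) * (-t) ^ r) = (\<lambda>r. pochhammer b r / fact r * t ^ r)"
    by (rule ext) (simp add: gbinomial_pochhammer flip: power_mult_distrib)
  finally have "(\<lambda>r. Gamma b * (pochhammer b r / fact r * t ^ r)) sums (Gamma b * (1 - t) powr (- b))"
    by (rule sums_mult)
  thus ?thesis using Gamma_add_of_nat_real[OF b] by (simp add: mult_ac)
qed

lemma has_integral_Beta_real_Ioo:
  fixes p q :: real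
  assumes "p > 0" "q > 0"
  shows "((\<lambda>t. t powr (p - 1) * (1 - t) powr (q - 1)) has_integral Beta p q) {0<..<1}"
  using has_integral_Beta_real[OF assms] by (simp add: has_integral_Icc_iff_Ioo)

lemma has_integral_series_nonneg_sums:
  fixes u :: "nat \<Rightarrow> 'n::euclidean_space \<Rightarrow> real"
  assumes integral_u: "\<And>r. (u r has_integral I r) S"
    and sums_g: "\<And>t. t \<in> S \<Longrightarrow> (\<lambda>r. u r t) sums g t"
    and nonneg: "\<And>r t. t \<in> S \<Longrightarrow> u r t \<ge> 0"
    and integral_g: "(g has_integral J) S"
  shows "I sums J"
proof -
  define f where "f n t = (\<Sum>r<n. u r t)" for n t
  have integral_f: "(f n has_integral (\<Sum>r<n. I r)) S" for n
    unfolding f_def by (rule has_integral_sum) (use integral_u in auto)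
  have "(\<lambda>n. integral S (f n)) \<longlonglongrightarrow> integral S g"
  proof (rule dominated_convergence(2))
    show "f n integrable_on S" for n using integral_f by blast
    show "g integrable_on S" using integral_g by blast
    show "norm (f n t) \<le> g t" if "t \<in> S" for n t
    proof -
      have "norm (f n t) = f n t" unfolding f_def using nonneg that by (simp add: sum_nonneg)
      also have "\<dots> \<le> g t"
        unfolding f_def sums_unique[OF sums_g[OF that]]
        by (rule sum_le_suminf[OF sums_summable[OF sums_g[OF that]]]) (use nonneg that in auto)
      finally show ?thesis .
    qed
    show "(\<lambda>n. f n t) \<longlonglongrightarrow> g t" if "t \<in> S" for t
      using sums_g[OF that] unfolding sums_def f_def .
  qed
  then show ?thesis
    unfolding sums_def integral_unique[OF integral_f] integral_unique[OF integral_g] .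
qed

theorem Gauss_hypergeometric_sums:
  fixes \<alpha> \<beta> c :: real
  assumes \<alpha>: "\<alpha> > 0" and \<beta>: "\<beta> > 0" and c: "c > 0"
  shows "(\<lambda>r. Gamma (\<alpha> + real r) * Gamma (\<beta> + real r) / (Gamma (\<alpha> + \<beta> + c + real r) * fact r))
     sums (Gamma \<alpha> * Gamma \<beta> * Gamma c / (Gamma (\<beta> + c) * Gamma (\<alpha> + c)))"
proof -
  define w where "w e t = t powr (\<alpha> - 1) * (1 - t) powr (e - 1)" for e t :: real
  define u where "u r t = Gamma (\<beta> + real r) / fact r * t ^ r * w (\<beta> + c) t" for r t
  have Beta_sums: "(\<lambda>r. Gamma (\<beta> + real r) / fact r * Beta (\<alpha> + real r) (\<beta> + c)) sums (Gamma \<beta> * Beta \<alpha> c)"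
  proof (rule has_integral_series_nonneg_sums)
    show "(u r has_integral Gamma (\<beta> + real r) / fact r * Beta (\<alpha> + real r) (\<beta> + c)) {0<..<1}" for r
    proof -
      have "Gamma (\<beta> + real r) / fact r * (t powr (\<alpha> + real r - 1) * (1 - t) powr (\<beta> + c - 1)) = u r t"
        if "t \<in> {0<..<1}" for t
      proof -
        have "t powr (\<alpha> + real r - 1) = t ^ r * t powr (\<alpha> - 1)"
          using that by (simp add: powr_realpow[symmetric] powr_add[symmetric] algebra_simps)
        then show ?thesis by (simp add: u_def w_def mult_ac)
      qed
      moreover have "((\<lambda>t. Gamma (\<beta> + real r) / fact r * (t powr (\<alpha> + real r - 1) * (1 - t) powr (\<beta> + c - 1)))
          has_integral Gamma (\<beta> + real r) / fact r * Beta (\<alpha> + real r) (\<beta> + c)) {0<..<1}"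
        by (intro has_integral_mult_right has_integral_Beta_real_Ioo) (use \<alpha> \<beta> c in auto)
      ultimately show ?thesis by (rule has_integral_eq)
    qed
    show "((\<lambda>t. Gamma \<beta> * w c t) has_integral Gamma \<beta> * Beta \<alpha> c) {0<..<1}"
      unfolding w_def by (intro has_integral_mult_right has_integral_Beta_real_Ioo) (use \<alpha> c in auto)
    show "(\<lambda>r. u r t) sums (Gamma \<beta> * w c t)" if "t \<in> {0<..<1}" for t
    proof -
      from that have t: "0 < t" "t < 1" by auto
      have "(1 - t) powr (- \<beta>) * w (\<beta> + c) t = w c t"
        using t by (simp add: w_def powr_add[symmetric] mult_ac)
      then show ?thesis
        using sums_mult2[OF Gamma_binomial_series_sums[OF \<beta> t], of "w (\<beta> + c) t"]
        by (simp add: u_def mult.assoc)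
    qed
    show "u r t \<ge> 0" if "t \<in> {0<..<1}" for r t
      using that \<beta> by (auto simp: u_def w_def intro!: mult_nonneg_nonneg less_imp_le)
  qed
  have "Gamma (\<beta> + c) > 0" using \<beta> c by simp
  then have "Gamma (\<beta> + real r) / fact r * Beta (\<alpha> + real r) (\<beta> + c) / Gamma (\<beta> + c) =
      Gamma (\<alpha> + real r) * Gamma (\<beta> + real r) / (Gamma (\<alpha> + \<beta> + c + real r) * fact r)" for r
    by (simp add: Beta_def field_simps add_ac)
  moreover have "Gamma \<beta> * Beta \<alpha> c / Gamma (\<beta> + c) = Gamma \<alpha> * Gamma \<beta> * Gamma c / (Gamma (\<beta> + c) * Gamma (\<alpha> + c))"
    by (simp add: Beta_def mult_ac)
  ultimately show ?thesis using sums_divide[OF Beta_sums, of "Gamma (\<beta> + c)"] by simp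
qed

lemma rising_pos: "x > 0 \<Longrightarrow> rising x b = Gamma (x + b) / Gamma x"
  by (simp add: rising_def)

lemma rising_zero_of_nat: "rising 0 (real r) = (if r = 0 then 1 else 0)"
  by (simp add: rising_def)

text \<open>The marginal identity, stripped of the factors that do not involve the last index;
  \<open>s\<close> and \<open>x\<close> stand for \<open>k \<Sum>\<^sub>i\<^sub><\<^sub>l \<mu>(A\<^sub>i)\<close> and \<open>k \<mu>(A\<^sub>l)\<close>, \<open>N\<close> for \<open>\<Sum>\<^sub>i\<^sub><\<^sub>l n\<^sub>i\<close>.\<close>

lemma rising_marginal_sums:
  fixes a \<rho> s x :: real
  assumes a: "a > 0" and \<rho>: "\<rho> > 0" and s: "s \<ge> 0" and x: "x \<ge> 0"
  shows "(\<lambda>r. rising \<rho> (s + x) * rising a (real N + real r) / rising (\<rho> + a) (s + x + (real N + real r))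
               * (rising x (real r) / fact r))
     sums (rising \<rho> s * rising a (real N) / rising (\<rho> + a) (s + real N))"
proof (cases "x = 0")
  case True
  then have "(\<lambda>r. rising \<rho> (s + x) * rising a (real N + real r) / rising (\<rho> + a) (s + x + (real N + real r))
               * (rising x (real r) / fact r))
      = (\<lambda>r. if r = 0 then rising \<rho> s * rising a (real N) / rising (\<rho> + a) (s + real N) else 0)"
    by (simp add: rising_zero_of_nat fun_eq_iff)
  then show ?thesis
    using sums_single[of 0 "\<lambda>_. rising \<rho> s * rising a (real N) / rising (\<rho> + a) (s + real N)"] by simp
next
  case False
  with x have x: "x > 0" by simp
  define K where "K = Gamma (\<rho> + s + x) * Gamma (\<rho> + a) / (Gamma \<rho> * Gamma a * Gamma x)"
  have "(\<lambda>r. K * (Gamma (a + real N + real r) * Gamma (x + real r)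
              / (Gamma (a + real N + x + (\<rho> + s) + real r) * fact r)))
     sums (K * (Gamma (a + real N) * Gamma x * Gamma (\<rho> + s)
              / (Gamma (x + (\<rho> + s)) * Gamma (a + real N + (\<rho> + s)))))"
    using a \<rho> s x by (intro sums_mult Gauss_hypergeometric_sums) auto
  moreover have "K * (Gamma (a + real N + real r) * Gamma (x + real r)
              / (Gamma (a + real N + x + (\<rho> + s) + real r) * fact r))
      = rising \<rho> (s + x) * rising a (real N + real r) / rising (\<rho> + a) (s + x + (real N + real r))
        * (rising x (real r) / fact r)" for r
    using a \<rho> s x by (simp add: K_def rising_pos field_simps add_ac)
  moreover have "K * (Gamma (a + real N) * Gamma x * Gamma (\<rho> + s)
              / (Gamma (x + (\<rho> + s)) * Gamma (a + real N + (\<rho> + s))))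
      = rising \<rho> s * rising a (real N) / rising (\<rho> + a) (s + real N)"
  proof -
    have "Gamma (\<rho> + s + x) > 0" "Gamma x > 0" using \<rho> s x by simp_all
    then show ?thesis
      using a \<rho> s by (simp add: K_def rising_pos field_simps add_ac)
  qed
  ultimately show ?thesis by simp
qed

lemma Pl_permute:
  assumes "\<pi> permutes {1..l}"
  shows "Pl a \<rho> k M l (A \<circ> \<pi>) (n \<circ> \<pi>) = Pl a \<rho> k M l A n"
  using sum.permute[OF assms, of "\<lambda>i. measure M (A i)"] sum.permute[OF assms, of n]
    prod.permute[OF assms, of "\<lambda>i. rising (k * measure M (A i)) (real (n i)) / fact (n i)"]
  by (simp add: Pl_def Let_def o_def)

lemma Pl_marginal_sums:
  assumes "a > 0" "\<rho> > 0" "k > 0"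
  shows "(\<lambda>r. Pl a \<rho> k M (Suc l) A (n(Suc l := r))) sums Pl a \<rho> k M l A n"
proof -
  define s where "s = k * (\<Sum>i=1..l. measure M (A i))"
  define x where "x = k * measure M (A (Suc l))"
  define N where "N = (\<Sum>i=1..l. n i)"
  define C where "C = (\<Prod>i=1..l. rising (k * measure M (A i)) (real (n i)) / fact (n i))"
  have "s \<ge> 0" "x \<ge> 0" using \<open>k > 0\<close> by (simp_all add: s_def x_def sum_nonneg)
  have "Pl a \<rho> k M (Suc l) A (n(Suc l := r)) =
      rising \<rho> (s + x) * rising a (real N + real r) / rising (\<rho> + a) (s + x + (real N + real r))
      * (rising x (real r) / fact r) * C" for r
  proof -
    have "(\<Sum>i=1..l. (n(Suc l := r)) i) = N" unfolding N_def by (intro sum.cong) auto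
    moreover have "(\<Prod>i=1..l. rising (k * measure M (A i)) (real ((n(Suc l := r)) i)) / fact ((n(Suc l := r)) i)) = C"
      unfolding C_def by (intro prod.cong) auto
    ultimately show ?thesis by (simp add: Pl_def Let_def s_def x_def distrib_left)
  qed
  moreover have "Pl a \<rho> k M l A n = rising \<rho> s * rising a (real N) / rising (\<rho> + a) (s + real N) * C"
    by (simp add: Pl_def Let_def s_def N_def C_def)
  ultimately show ?thesis
    using sums_mult2[OF rising_marginal_sums[OF assms(1,2) \<open>s \<ge> 0\<close> \<open>x \<ge> 0\<close>], where c = C] by simp
qed

theorem theorem4:
  fixes M :: "'a::polish_space measure"
    and a \<rho> k :: real and l :: nat
    and A :: "nat \<Rightarrow> 'a set" and n :: "nat \<Rightarrow> nat"
  assumes "sets M = sets borel"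
    and "\<And>B. B \<in> sets borel \<Longrightarrow> bounded B \<Longrightarrow> emeasure M B < \<infinity>"
    and "a > 0" "\<rho> > 0" "k > 0"
    and "\<And>i. i \<in> {1..l} \<Longrightarrow> A i \<in> sets borel"
    and "\<And>i. i \<in> {1..l} \<Longrightarrow> bounded (A i)"
    and "disjoint_family_on A {1..l}"
  shows "(\<forall>\<pi>. \<pi> permutes {1..l} \<longrightarrow> Pl a \<rho> k M l (A \<circ> \<pi>) (n \<circ> \<pi>) = Pl a \<rho> k M l A n)
       \<and> (l \<ge> 2 \<longrightarrow> (\<lambda>r. Pl a \<rho> k M l A (n(l := r))) sums Pl a \<rho> k M (l - 1) A n)"
proof (intro conjI allI impI)
  show "Pl a \<rho> k M l (A \<circ> \<pi>) (n \<circ> \<pi>) = Pl a \<rho> k M l A n" if "\<pi> permutes {1..l}" for \<pi>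
    using that by (rule Pl_permute)
  assume "l \<ge> 2"
  then obtain l' where "l = Suc l'" by (cases l) auto
  then show "(\<lambda>r. Pl a \<rho> k M l A (n(l := r))) sums Pl a \<rho> k M (l - 1) A n"
    using Pl_marginal_sums[OF \<open>a > 0\<close> \<open>\<rho> > 0\<close> \<open>k > 0\<close>] by simp
qed

end
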